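(* Let $N_p\in\mathbb{N}$ and let $X,Y\in\mathbb{C}^{N_p\times N_p}$ be such that the block matrix $W=\begin{bmatrix} X & Y^* \\ Y & X^*\end{bmatrix}$ is invertible with $W^{-1}=\eta W^\dagger \eta$, where $\eta=\begin{bmatrix} +I & 0\\ 0 & -I\end{bmatrix}$. Let $\sigma>0$ and let $F^{20},F^{02}\in\mathbb{C}^{N_p}$ be random vectors such that all $4N_p$ real numbers $\operatorname{Re}F^{20}_i,\operatorname{Re}F^{02}_i,\operatorname{Im}F^{20}_i,\operatorname{Im}F^{02}_i$ ($i=1,\dots,N_p$) are independent, identically distributed Gaussian random variables with mean $0$ and variance $\sigma^2$. Define the random vectors $T,\widetilde T\in\mathbb{C}^{N_p}$ by $$\begin{bmatrix} T\\ \widetilde T\end{bmatrix}=W^\dagger\begin{bmatrix} F^{20}\\ F^{02}\end{bmatrix}.$$ Then for every $i=1,\dots,N_p$, $$\mathbb{E}\big[|T_i|^2\big]=\mathbb{E}\big[|\widetilde T_i|^2\big]=4\sigma^2\Big(\tfrac12+\|Y\mathbf{e}_i\|^2\Big),$$ where $\mathbf{e}_i$ is the $i$-th standard basis vector of $\mathbb{C}^{N_p}$ and $\|\cdot\|$ is the Euclidean norm.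
   Context: $A^\dagger$ denotes the conjugate transpose, $A^T$ the transpose and $A^*$ the entrywise complex conjugate of a matrix $A$. In the physical interpretation, $X,Y$ are the QRPA forward/backward eigenmode amplitude matrices, $F^{20},F^{02}$ the matrix elements of a random excitation operator $\hat F$, and $T_i=\langle i|\hat F|0\rangle$, $\widetilde T_i=\langle 0|\hat F|i\rangle$ the transition strengths; these interpretations are not needed for the statement. *)

theory Defs
  imports "HOL-Analysis.Analysis" "HOL-Probability.Probability"
begin

definition adj_mat :: "complex^'n^'m \<Rightarrow> complex^'m^'n" where
  "adj_mat A = (\<chi> i j. cnj (A $ j $ i))"

definition conj_mat :: "complex^'n^'m \<Rightarrow> complex^'n^'m" where
  "conj_mat A = (\<chi> i j. cnj (A $ i $ j))"

definition block_mat ::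
  "complex^'n::finite^'n \<Rightarrow> complex^'n^'n \<Rightarrow> complex^'n^'n \<Rightarrow> complex^'n^'n \<Rightarrow> complex^('n+'n)^('n+'n)" where
  "block_mat A B C D = (\<chi> k l. case k of
      Inl i \<Rightarrow> (case l of Inl j \<Rightarrow> A $ i $ j | Inr j \<Rightarrow> B $ i $ j)
    | Inr i \<Rightarrow> (case l of Inl j \<Rightarrow> C $ i $ j | Inr j \<Rightarrow> D $ i $ j))"

definition W_mat :: "complex^'n::finite^'n \<Rightarrow> complex^'n^'n \<Rightarrow> complex^('n+'n)^('n+'n)" where
  "W_mat X Y = block_mat X (conj_mat Y) Y (conj_mat X)"

definition eta_mat :: "complex^('n::finite+'n)^('n+'n)" where
  "eta_mat = (\<chi> k l. if k = l then (case k of Inl _ \<Rightarrow> 1 | Inr _ \<Rightarrow> -1) else 0)"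

definition stack :: "complex^'n::finite \<Rightarrow> complex^'n \<Rightarrow> complex^('n+'n)" where
  "stack u v = (\<chi> k. case k of Inl i \<Rightarrow> u $ i | Inr i \<Rightarrow> v $ i)"

definition re_im_comps :: "('a \<Rightarrow> complex^'n) \<Rightarrow> ('a \<Rightarrow> complex^'n) \<Rightarrow> 'n \<times> bool \<times> bool \<Rightarrow> 'a \<Rightarrow> real" where
  "re_im_comps F20 F02 = (\<lambda>(i, re, is20) \<omega>.
      (if re then Re else Im) ((if is20 then F20 \<omega> else F02 \<omega>) $ i))"

end

theory Submission
  imports Defs
begin

text \<open>
  Each entry of the transformed vector is a fixed complex linear form in the \<open>4 N\<^sub>p\<close> real
  Gaussians, so by independence its mean square is \<open>\<sigma>\<^sup>2\<close> times the sum of squared moduli of the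
  coefficients; splitting real and imaginary parts doubles this to \<open>2 \<sigma>\<^sup>2\<close> times the squared norm
  of the corresponding column of \<open>W\<close>. That column contains the \<open>i\<close>-th columns of \<open>X\<close> and \<open>Y\<close>
  (up to conjugation), and the diagonal of \<open>W\<^sup>\<dagger> \<eta> W = \<eta>\<close> says
  \<open>\<parallel>X e\<^sub>i\<parallel>\<^sup>2 - \<parallel>Y e\<^sub>i\<parallel>\<^sup>2 = 1\<close>.
\<close>

lemma (in prob_space) integrable_normal_distributed_power:
  assumes "0 < \<sigma>" and "distributed M lborel X (normal_density \<mu> \<sigma>)"
  shows "integrable M (\<lambda>\<omega>. (X \<omega> - \<mu>) ^ k)"
  using distributed_integrable[OF assms(2), of "\<lambda>x. (x - \<mu>) ^ k"]
    integrable_normal_moment[OF assms(1)]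
  by simp

lemma (in prob_space) expectation_square_normal_distributed:
  assumes \<sigma>: "0 < \<sigma>" and normal: "distributed M lborel X (normal_density 0 \<sigma>)"
  shows "expectation (\<lambda>\<omega>. X \<omega> * X \<omega>) = \<sigma>\<^sup>2"
  using normal_distributed_variance[OF \<sigma> normal] normal_distributed_expectation[OF \<sigma> normal]
  by (simp add: power2_eq_square)

lemma (in prob_space) expectation_mult_indep_normal:
  assumes indep: "indep_vars (\<lambda>_. borel) g I"
    and normal: "\<And>k. k \<in> I \<Longrightarrow> distributed M lborel (g k) (normal_density 0 \<sigma>)"
    and \<sigma>: "0 < \<sigma>" and r: "r \<in> I" and s: "s \<in> I"
  shows "integrable M (\<lambda>\<omega>. g r \<omega> * g s \<omega>)
    \<and> expectation (\<lambda>\<omega>. g r \<omega> * g s \<omega>) = (if r = s then \<sigma>\<^sup>2 else 0)"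
proof (cases "r = s")
  case True
  then show ?thesis
    using integrable_normal_distributed_power[OF \<sigma> normal[OF s], of 2]
      expectation_square_normal_distributed[OF \<sigma> normal[OF s]]
    by (simp add: power2_eq_square)
next
  case False
  have pair: "indep_vars (\<lambda>_. borel) g {r, s}"
    using indep_vars_subset[OF indep] r s by simp
  have "integrable M (g k)" if "k \<in> {r, s}" for k
    using integrable_normal_distributed_power[OF \<sigma> normal, of k 1] that r s by auto
  then have "integrable M (\<lambda>\<omega>. \<Prod>k\<in>{r, s}. g k \<omega>)
      \<and> expectation (\<lambda>\<omega>. \<Prod>k\<in>{r, s}. g k \<omega>) = (\<Prod>k\<in>{r, s}. expectation (g k))"
    using indep_vars_integrable[OF _ pair] indep_vars_lebesgue_integral[OF _ pair] by simp
  then show ?thesis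
    using False normal_distributed_expectation[OF \<sigma> normal] r s by simp
qed

lemma cmod_sum_of_real_squared:
  "(cmod (\<Sum>r\<in>I. d r * of_real (x r)))\<^sup>2
    = (\<Sum>r\<in>I. \<Sum>s\<in>I. Re (d r * cnj (d s)) * (x r * x s))"
proof -
  let ?z = "\<Sum>r\<in>I. d r * of_real (x r)"
  have "(cmod ?z)\<^sup>2 = Re (?z * cnj ?z)"
    by (simp only: complex_mult_cnj cmod_power2 Re_complex_of_real)
  also have "?z * cnj ?z = (\<Sum>r\<in>I. \<Sum>s\<in>I. (d r * cnj (d s)) * of_real (x r * x s))"
    by (simp add: sum_product cnj_sum mult_ac)
  finally show ?thesis
    by (simp add: Re_sum)
qed

lemma (in prob_space) expectation_cmod_sum_indep_normal:
  assumes "finite I"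
    and indep: "indep_vars (\<lambda>_. borel) g I"
    and normal: "\<And>k. k \<in> I \<Longrightarrow> distributed M lborel (g k) (normal_density 0 \<sigma>)"
    and \<sigma>: "0 < \<sigma>"
  shows "expectation (\<lambda>\<omega>. (cmod (\<Sum>r\<in>I. d r * of_real (g r \<omega>)))\<^sup>2)
    = \<sigma>\<^sup>2 * (\<Sum>r\<in>I. (cmod (d r))\<^sup>2)"
proof -
  note moments = expectation_mult_indep_normal[OF indep normal \<sigma>]
  have "expectation (\<lambda>\<omega>. (cmod (\<Sum>r\<in>I. d r * of_real (g r \<omega>)))\<^sup>2)
      = (\<Sum>r\<in>I. \<Sum>s\<in>I. Re (d r * cnj (d s)) * expectation (\<lambda>\<omega>. g r \<omega> * g s \<omega>))"
    by (simp add: cmod_sum_of_real_squared integral_sum integrable_sum moments)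
  also have "\<dots> = (\<Sum>r\<in>I. Re (d r * cnj (d r)) * \<sigma>\<^sup>2)"
    using \<open>finite I\<close> by (simp add: moments if_distrib cong: if_cong)
  also have "\<dots> = \<sigma>\<^sup>2 * (\<Sum>r\<in>I. (cmod (d r))\<^sup>2)"
    by (simp add: sum_distrib_left complex_mult_cnj cmod_power2 mult_ac)
  finally show ?thesis .
qed

lemma sum_UNIV_Plus:
  fixes f :: "'n::finite + 'm::finite \<Rightarrow> 'b::comm_monoid_add"
  shows "(\<Sum>k\<in>UNIV. f k) = (\<Sum>j\<in>UNIV. f (Inl j)) + (\<Sum>j\<in>UNIV. f (Inr j))"
  using sum.Plus[of "UNIV::'n set" "UNIV::'m set" f] by (simp add: comp_def)

lemma sum_UNIV_prod_bool_bool: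
  fixes f :: "'n::finite \<times> bool \<times> bool \<Rightarrow> 'b::comm_monoid_add"
  shows "(\<Sum>r\<in>UNIV. f r)
    = (\<Sum>j\<in>UNIV. f (j, True, True) + f (j, True, False) + f (j, False, True) + f (j, False, False))"
proof -
  have "(\<Sum>r\<in>UNIV. f r) = (\<Sum>j\<in>UNIV. \<Sum>p\<in>UNIV \<times> UNIV. f (j, p))"
    by (simp add: sum.cartesian_product UNIV_Times_UNIV)
  then show ?thesis
    by (simp add: sum.cartesian_product[symmetric] UNIV_bool add_ac)
qed

definition re_im_coeffs :: "('n + 'n \<Rightarrow> complex) \<Rightarrow> 'n \<times> bool \<times> bool \<Rightarrow> complex" where
  "re_im_coeffs c = (\<lambda>(j, re, is20). (if is20 then c (Inl j) else c (Inr j)) * (if re then 1 else \<i>))"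

lemma sum_stack_eq_sum_re_im_comps:
  fixes c :: "'n::finite + 'n \<Rightarrow> complex"
  shows "(\<Sum>k\<in>UNIV. c k * stack (F20 \<omega>) (F02 \<omega>) $ k)
    = (\<Sum>r\<in>UNIV. re_im_coeffs c r * of_real (re_im_comps F20 F02 r \<omega>))"
  unfolding sum_UNIV_Plus sum_UNIV_prod_bool_bool sum.distrib[symmetric]
  by (rule sum.cong)
     (simp_all add: stack_def re_im_coeffs_def re_im_comps_def complex_eq_iff algebra_simps)

lemma sum_cmod_re_im_coeffs:
  fixes c :: "'n::finite + 'n \<Rightarrow> complex"
  shows "(\<Sum>r\<in>UNIV. (cmod (re_im_coeffs c r))\<^sup>2) = 2 * (\<Sum>k\<in>UNIV. (cmod (c k))\<^sup>2)"
  by (simp add: sum_UNIV_Plus sum_UNIV_prod_bool_bool re_im_coeffs_def norm_mult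
      sum.distrib sum_distrib_left)

lemma expectation_cmod_linear_form_stack:
  fixes c :: "'n::finite + 'n \<Rightarrow> complex"
  assumes "prob_space M"
    and "prob_space.indep_vars M (\<lambda>_. borel) (re_im_comps F20 F02) UNIV"
    and "\<And>k. distributed M lborel (re_im_comps F20 F02 k) (normal_density 0 \<sigma>)"
    and "0 < \<sigma>"
  shows "(LINT \<omega>|M. (cmod (\<Sum>k\<in>UNIV. c k * stack (F20 \<omega>) (F02 \<omega>) $ k))\<^sup>2)
    = 2 * \<sigma>\<^sup>2 * (\<Sum>k\<in>UNIV. (cmod (c k))\<^sup>2)"
  using prob_space.expectation_cmod_sum_indep_normal[OF assms(1) _ assms(2-4)]
  by (simp add: sum_stack_eq_sum_re_im_comps sum_cmod_re_im_coeffs)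

definition eta_sign :: "'n + 'm \<Rightarrow> complex" where
  "eta_sign k = (case k of Inl _ \<Rightarrow> 1 | Inr _ \<Rightarrow> -1)"

lemma eta_mat_mult_nth: "(eta_mat ** A) $ k $ l = eta_sign k * A $ k $ l"
  by (simp add: matrix_matrix_mult_def eta_mat_def eta_sign_def if_distrib[of "\<lambda>x. x * _"]
      cong: if_cong)

lemma mult_eta_mat_nth: "(A ** eta_mat) $ k $ l = A $ k $ l * eta_sign l"
  by (simp add: matrix_matrix_mult_def eta_mat_def eta_sign_def if_distrib[of "\<lambda>x. _ * x"]
      cong: if_cong)

lemma matrix_inv_mult_left: "invertible A \<Longrightarrow> matrix_inv A ** A = mat 1"
  unfolding invertible_def matrix_inv_def by (rule someI2_ex) auto

lemma eta_sign_mult_self: "eta_sign k * eta_sign k = 1"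
  by (simp add: eta_sign_def split: sum.split)

lemma pseudo_unitary_column_norm:
  fixes W :: "complex^('n::finite + 'n)^('n + 'n)"
  assumes "invertible W" and "matrix_inv W = eta_mat ** adj_mat W ** eta_mat"
  shows "(\<Sum>m\<in>UNIV. eta_sign m * of_real ((cmod (W $ m $ l))\<^sup>2)) = eta_sign l"
proof -
  have "(eta_mat ** adj_mat W ** eta_mat ** W) $ l $ l = 1"
    using matrix_inv_mult_left[OF assms(1)] assms(2) by (simp add: mat_def)
  then have "eta_sign l * (\<Sum>m\<in>UNIV. eta_sign m * of_real ((cmod (W $ m $ l))\<^sup>2)) = 1"
    by (simp add: matrix_matrix_mult_def[of "_ ** eta_mat"] eta_mat_mult_nth mult_eta_mat_nth
        adj_mat_def complex_norm_square sum_distrib_left mult_ac del: of_real_power)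
  then have "eta_sign l * (eta_sign l * (\<Sum>m\<in>UNIV. eta_sign m * of_real ((cmod (W $ m $ l))\<^sup>2)))
      = eta_sign l"
    by simp
  then show ?thesis
    by (simp only: mult.assoc[symmetric] eta_sign_mult_self mult_1)
qed

lemma norm_mult_axis_squared:
  fixes A :: "complex^'n::finite^'m::finite"
  shows "(norm (A *v axis i 1))\<^sup>2 = (\<Sum>j\<in>UNIV. (cmod (A $ j $ i))\<^sup>2)"
proof -
  have "(A *v axis i 1) $ j = A $ j $ i" for j
    by (simp add: matrix_vector_mult_def axis_def if_distrib[of "\<lambda>x. _ * x"] cong: if_cong)
  then show ?thesis
    by (simp add: norm_vec_def L2_set_def sum_nonneg)
qed

lemma W_mat_column_norm_identity:
  fixes X Y :: "complex^'n::finite^'n"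
  assumes "invertible (W_mat X Y)"
    and "matrix_inv (W_mat X Y) = eta_mat ** adj_mat (W_mat X Y) ** eta_mat"
  shows "(norm (X *v axis i 1))\<^sup>2 = 1 + (norm (Y *v axis i 1))\<^sup>2"
proof -
  have "of_real ((\<Sum>j\<in>UNIV. (cmod (X $ j $ i))\<^sup>2) - (\<Sum>j\<in>UNIV. (cmod (Y $ j $ i))\<^sup>2)) = (1::complex)"
    using pseudo_unitary_column_norm[OF assms, of "Inl i"]
    by (simp add: sum_UNIV_Plus eta_sign_def W_mat_def block_mat_def sum_negf)
  then have "(\<Sum>j\<in>UNIV. (cmod (X $ j $ i))\<^sup>2) - (\<Sum>j\<in>UNIV. (cmod (Y $ j $ i))\<^sup>2) = 1"
    by (simp only: of_real_eq_1_iff)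
  then show ?thesis
    by (simp add: norm_mult_axis_squared)
qed

lemma sum_cmod_W_mat_column:
  fixes X Y :: "complex^'n::finite^'n"
  assumes "l = Inl i \<or> l = Inr i"
  shows "(\<Sum>k\<in>UNIV. (cmod (W_mat X Y $ k $ l))\<^sup>2)
    = (norm (X *v axis i 1))\<^sup>2 + (norm (Y *v axis i 1))\<^sup>2"
  using assms
  by (auto simp: sum_UNIV_Plus W_mat_def block_mat_def conj_mat_def norm_mult_axis_squared)

theorem mainTheorem1:
  fixes X Y :: "complex^'n^'n"
    and M :: "'a measure"
    and \<sigma> :: real
    and F20 F02 :: "'a \<Rightarrow> complex^'n"
  assumes W_inv: "invertible (W_mat X Y)"
    and W_inv_eq: "matrix_inv (W_mat X Y) = eta_mat ** adj_mat (W_mat X Y) ** eta_mat"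
    and sigma_pos: "\<sigma> > 0"
    and M: "prob_space M"
    and indep: "prob_space.indep_vars M (\<lambda>_. borel) (re_im_comps F20 F02) UNIV"
    and gauss: "\<And>k. distributed M lborel (re_im_comps F20 F02 k) (normal_density 0 \<sigma>)"
  shows "\<forall>i.
      (LINT \<omega>|M. (cmod ((adj_mat (W_mat X Y) *v stack (F20 \<omega>) (F02 \<omega>)) $ Inl i))\<^sup>2)
        = 4 * \<sigma>\<^sup>2 * (1/2 + (norm (Y *v axis i 1))\<^sup>2)
    \<and> (LINT \<omega>|M. (cmod ((adj_mat (W_mat X Y) *v stack (F20 \<omega>) (F02 \<omega>)) $ Inr i))\<^sup>2)
        = 4 * \<sigma>\<^sup>2 * (1/2 + (norm (Y *v axis i 1))\<^sup>2)"
proof -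
  let ?W = "W_mat X Y"
  have "(LINT \<omega>|M. (cmod ((adj_mat ?W *v stack (F20 \<omega>) (F02 \<omega>)) $ l))\<^sup>2)
      = 4 * \<sigma>\<^sup>2 * (1/2 + (norm (Y *v axis i 1))\<^sup>2)" if "l = Inl i \<or> l = Inr i" for l i
  proof -
    have "(LINT \<omega>|M. (cmod ((adj_mat ?W *v stack (F20 \<omega>) (F02 \<omega>)) $ l))\<^sup>2)
        = 2 * \<sigma>\<^sup>2 * (\<Sum>k\<in>UNIV. (cmod (?W $ k $ l))\<^sup>2)"
      using expectation_cmod_linear_form_stack[OF M indep gauss sigma_pos, of "\<lambda>k. cnj (?W $ k $ l)"]
      by (simp add: matrix_vector_mult_def adj_mat_def)
    then show ?thesis
      by (simp add: sum_cmod_W_mat_column[OF that] W_mat_column_norm_identity[OF W_inv W_inv_eq]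
          algebra_simps)
  qed
  then show ?thesis by simp
qed

end
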